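(* Let $T\in B(\mathcal{F})$ be a block-diagonal operator and let $(A_n)_{n\ge0}$ be its sequence of $\mathcal{C}$-approximants (defined in the context). Then for every $n\ge0$ and every $m\ge0$, \[A_n|_{\mathcal{F}_m}=\begin{cases}T|_{\mathcal{F}_m}&\text{if }m\le n,\\ (T|_{\mathcal{F}_n})\otimes I_{m-n}&\text{if }m>n,\end{cases}\] where $(T|_{\mathcal{F}_n})\otimes I_{m-n}$ acts on $\mathcal{F}_m=\mathcal{F}_n\otimes\mathcal{F}_{m-n}$ and $I_{m-n}$ is the identity of $\mathcal{F}_{m-n}$.
   Context: $d\ge2$; $\xi_1,\ldots,\xi_d$ is the standard orthonormal basis of $\mathbb{C}^d$. $\mathcal{F}=\bigoplus_{n\ge0}\mathcal{F}_n$ is the full Fock space, $\mathcal{F}_0=\mathbb{C}\Omega$, $\mathcal{F}_n=(\mathbb{C}^d)^{\otimes n}$ with the usual inner product. $L_j\eta=\xi_j\otimes\eta$ (and $L_j\Omega=\xi_j$) are the left creation operators, $\mathcal{C}=C^*(L_1,\ldots,L_d)$. $T$ is block-diagonal if $T(\mathcal{F}_n)\subseteq\mathcal{F}_n$ for all $n$. The $\mathcal{C}$-approximants of $T$ are defined recursively by $A_0=\langle T\Omega,\Omega\rangle I_{\mathcal{F}}$ and, for $n\ge0$, $A_{n+1}=A_n+\sum c_{i_1,\ldots,i_{n+1};j_1,\ldots,j_{n+1}}(L_{i_1}\cdots L_{i_{n+1}})(L_{j_1}\cdots L_{j_{n+1}})^*$, the sum over all $1\le i_1,\ldots,i_{n+1},j_1,\ldots,j_{n+1}\le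 d$, with $c_{i_1,\ldots,i_{n+1};j_1,\ldots,j_{n+1}}=\langle T(\xi_{j_1}\otimes\cdots\otimes\xi_{j_{n+1}}),\xi_{i_1}\otimes\cdots\otimes\xi_{i_{n+1}}\rangle-\delta_{i_{n+1},j_{n+1}}\langle T(\xi_{j_1}\otimes\cdots\otimes\xi_{j_n}),\xi_{i_1}\otimes\cdots\otimes\xi_{i_n}\rangle$ (for $n=0$ the second inner product is $\langle T\Omega,\Omega\rangle$). *)

theory Defs
  imports "HOL-Analysis.Analysis"
begin

text \<open>The orthonormal basis vector xi_{i1} (x) ... (x) xi_{in}
  of F_n is indexed by the word [i1,...,in] (letters 0..d-1, i.e. xi_{k+1} is letter k);
  Omega is the empty word.\<close>

type_synonym vec = "nat list \<Rightarrow> complex"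

definition valid_word :: "nat \<Rightarrow> nat list \<Rightarrow> bool" where
  "valid_word d w \<longleftrightarrow> (\<forall>i\<in>set w. i < d)"

definition words :: "nat \<Rightarrow> nat \<Rightarrow> nat list set" where
  "words d n = {w. length w = n \<and> valid_word d w}"

definition fock :: "nat \<Rightarrow> vec set" where
  "fock d = {x. (\<forall>w. x w \<noteq> 0 \<longrightarrow> valid_word d w) \<and> (\<lambda>w. (cmod (x w))\<^sup>2) summable_on UNIV}"

definition fock_norm2 :: "vec \<Rightarrow> real" where
  "fock_norm2 x = infsum (\<lambda>w. (cmod (x w))\<^sup>2) UNIV"

definition Fn :: "nat \<Rightarrow> nat \<Rightarrow> vec set" where
  "Fn d n = {x. \<forall>w. x w \<noteq> 0 \<longrightarrow> w \<in> words d n}"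

definition basis_vec :: "nat list \<Rightarrow> vec" where
  "basis_vec J = (\<lambda>w. if w = J then 1 else 0)"

definition bounded_linear_fock :: "nat \<Rightarrow> (vec \<Rightarrow> vec) \<Rightarrow> bool" where
  "bounded_linear_fock d T \<longleftrightarrow>
     (\<forall>x\<in>fock d. T x \<in> fock d) \<and>
     (\<forall>x\<in>fock d. \<forall>y\<in>fock d. T (\<lambda>w. x w + y w) = (\<lambda>w. T x w + T y w)) \<and>
     (\<forall>x\<in>fock d. \<forall>c. T (\<lambda>w. c * x w) = (\<lambda>w. c * T x w)) \<and>
     (\<exists>C. \<forall>x\<in>fock d. fock_norm2 (T x) \<le> C * fock_norm2 x)"

definition block_diagonal :: "nat \<Rightarrow> (vec \<Rightarrow> vec) \<Rightarrow> bool" where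
  "block_diagonal d T \<longleftrightarrow> (\<forall>n. \<forall>x\<in>Fn d n. T x \<in> Fn d n)"

definition Lc :: "nat \<Rightarrow> vec \<Rightarrow> vec" where
  "Lc i x = (\<lambda>v. if v \<noteq> [] \<and> hd v = i then x (tl v) else 0)"

definition Lstar :: "nat \<Rightarrow> vec \<Rightarrow> vec" where
  "Lstar i x = (\<lambda>w. x (i # w))"

fun Lword :: "nat list \<Rightarrow> vec \<Rightarrow> vec" where
  "Lword [] = id"
| "Lword (i # I) = Lc i \<circ> Lword I"

fun Lword_star :: "nat list \<Rightarrow> vec \<Rightarrow> vec" where
  "Lword_star [] = id"
| "Lword_star (j # J) = Lword_star J \<circ> Lstar j"

definition entry :: "(vec \<Rightarrow> vec) \<Rightarrow> nat list \<Rightarrow> nat list \<Rightarrow> complex" where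
  "entry T I J = T (basis_vec J) I"

text \<open>Coefficient c_{I;J} for words I, J of length n+1 (butlast [i] = [] gives Omega).\<close>
definition coef :: "(vec \<Rightarrow> vec) \<Rightarrow> nat list \<Rightarrow> nat list \<Rightarrow> complex" where
  "coef T I J = entry T I J
     - (if last I = last J then entry T (butlast I) (butlast J) else 0)"

fun approx :: "nat \<Rightarrow> (vec \<Rightarrow> vec) \<Rightarrow> nat \<Rightarrow> vec \<Rightarrow> vec" where
  "approx d T 0 = (\<lambda>x w. entry T [] [] * x w)"
| "approx d T (Suc n) = (\<lambda>x w. approx d T n x w +
      (\<Sum>I\<in>words d (Suc n). \<Sum>J\<in>words d (Suc n).
          coef T I J * Lword I (Lword_star J x) w))"

text \<open>Tensor product of f in F_n with g, under F_{n+k} = F_n (x) F_k (concatenation).\<close>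
definition tensor :: "nat \<Rightarrow> vec \<Rightarrow> vec \<Rightarrow> vec" where
  "tensor n f g = (\<lambda>z. f (take n z) * g (drop n z))"

definition restr_tensor_id :: "nat \<Rightarrow> (vec \<Rightarrow> vec) \<Rightarrow> nat \<Rightarrow> nat \<Rightarrow> vec \<Rightarrow> vec" where
  "restr_tensor_id d T n m x =
     (\<lambda>z. \<Sum>w\<in>words d m. x w * tensor n (T (basis_vec (take n w))) (basis_vec (drop n w)) z)"

end

theory Submission
  imports Defs
begin

text \<open>On a level F_m with m > n, the increment A_{n+1} - A_n has exactly the matrix entries
  of (T|F_{n+1}) \<otimes> I minus those of (T|F_n) \<otimes> I: the second term of each coefficient c_{I;J}
  is an entry of (T|F_n) \<otimes> I, the delta on the last letters being the identity on the extra
  tensor factor F_1. For m \<le> n the increment vanishes on F_m. Hence the increments telescope to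
  A_n = (T|F_k) \<otimes> I on F_m with k = min n m, and (T|F_m) \<otimes> I_0 = T|F_m by linearity.
  Block-diagonality makes all these operators vanish outside the level F_m.\<close>

lemma finite_words: "finite (words d n)"
proof -
  have "words d n \<subseteq> {xs. set xs \<subseteq> {..<d} \<and> length xs = n}"
    by (auto simp: words_def valid_word_def)
  then show ?thesis
    by (rule finite_subset) (rule finite_lists_length_eq, simp)
qed

lemma words_0: "words d 0 = {[]}"
  by (auto simp: words_def valid_word_def)

lemma append_in_words_iff:
  "u @ r \<in> words d (length u + k) \<longleftrightarrow> valid_word d u \<and> r \<in> words d k"
  by (auto simp: words_def valid_word_def)

lemma sum_words_append:
  assumes "k \<le> m"
  shows "(\<Sum>w\<in>words d m. g w) = (\<Sum>u\<in>words d k. \<Sum>r\<in>words d (m - k). g (u @ r))"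
proof -
  have "bij_betw (\<lambda>(u, r). u @ r) (words d k \<times> words d (m - k)) (words d m)"
  proof (rule bij_betw_byWitness[where f' = "\<lambda>w. (take k w, drop k w)"])
    show "(\<lambda>(u, r). u @ r) ` (words d k \<times> words d (m - k)) \<subseteq> words d m"
      using assms by (auto simp: words_def valid_word_def)
    show "(\<lambda>w. (take k w, drop k w)) ` words d m \<subseteq> words d k \<times> words d (m - k)"
      using assms by (auto simp: words_def valid_word_def dest: in_set_takeD in_set_dropD)
  qed (auto simp: words_def)
  then have "(\<Sum>w\<in>words d m. g w) = (\<Sum>(u, r)\<in>words d k \<times> words d (m - k). g (u @ r))"
    by (simp add: sum.reindex_bij_betw[symmetric] case_prod_unfold)
  then show ?thesis
    by (simp add: sum.cartesian_product)
qed

lemma sum_words_Suc: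
  "(\<Sum>w\<in>words d (Suc n). g w) = (\<Sum>u\<in>words d n. \<Sum>j<d. g (u @ [j]))"
proof -
  have "words d (Suc 0) = (\<lambda>j. [j]) ` {..<d}"
    by (auto simp: words_def valid_word_def length_Suc_conv)
  then have inner: "(\<Sum>r\<in>words d (Suc 0). g (u @ r)) = (\<Sum>j<d. g (u @ [j]))" for u
    by (simp add: sum.reindex inj_on_def)
  have "(\<Sum>w\<in>words d (Suc n). g w) = (\<Sum>u\<in>words d n. \<Sum>r\<in>words d (Suc n - n). g (u @ r))"
    by (rule sum_words_append) simp
  then show ?thesis
    by (simp add: inner)
qed

lemma Lword_star_apply: "Lword_star J x = (\<lambda>w. x (J @ w))"
  by (induction J arbitrary: x) (auto simp: Lstar_def)

lemma Lword_apply: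
  "Lword I y = (\<lambda>v. if take (length I) v = I then y (drop (length I) v) else 0)"
proof (induction I)
  case (Cons i I)
  show ?case
  proof
    fix v
    show "Lword (i # I) y v =
        (if take (length (i # I)) v = i # I then y (drop (length (i # I)) v) else 0)"
      using Cons by (cases v) (auto simp: Lc_def)
  qed
qed simp

lemma finite_support_in_fock:
  assumes "finite A" "\<And>w. w \<in> A \<Longrightarrow> valid_word d w" "\<And>w. w \<notin> A \<Longrightarrow> x w = 0"
  shows "x \<in> fock d"
proof -
  have "(\<lambda>w. (cmod (x w))\<^sup>2) summable_on UNIV \<longleftrightarrow> (\<lambda>w. (cmod (x w))\<^sup>2) summable_on A"
    by (rule summable_on_cong_neutral) (auto simp: assms(3))
  then show ?thesis
    using assms by (auto simp: fock_def)
qed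

lemma bounded_linear_fock_sum_basis:
  assumes T: "bounded_linear_fock d T" and "finite A" and A: "\<And>w. w \<in> A \<Longrightarrow> valid_word d w"
  shows "T (\<lambda>v. \<Sum>w\<in>A. c w * basis_vec w v) = (\<lambda>v. \<Sum>w\<in>A. c w * T (basis_vec w) v)"
  using \<open>finite A\<close> A
proof (induction A rule: finite_induct)
  have add: "T (\<lambda>w. x w + y w) = (\<lambda>w. T x w + T y w)" if "x \<in> fock d" "y \<in> fock d" for x y
    using T that unfolding bounded_linear_fock_def by blast
  have scale: "T (\<lambda>w. c * x w) = (\<lambda>w. c * T x w)" if "x \<in> fock d" for c x
    using T that unfolding bounded_linear_fock_def by blast
  {
    case empty
    have "(\<lambda>_. 0) \<in> fock d"
      by (rule finite_support_in_fock[of "{}"]) auto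
    from scale[OF this, of 0] show ?case
      by simp
  next
    case (insert a F)
    have a: "basis_vec a \<in> fock d"
      by (rule finite_support_in_fock[of "{a}"]) (use insert in \<open>auto simp: basis_vec_def\<close>)
    have "(\<lambda>v. c a * basis_vec a v) \<in> fock d" "(\<lambda>v. \<Sum>w\<in>F. c w * basis_vec w v) \<in> fock d"
      by (rule finite_support_in_fock[of "{a}"], use insert in \<open>auto simp: basis_vec_def\<close>)
        (rule finite_support_in_fock[of F],
          use insert in \<open>auto simp: basis_vec_def intro!: sum.neutral\<close>)
    from add[OF this] show ?case
      using insert scale[OF a] by simp
  }
qed

lemma bounded_linear_fock_Fn_apply:
  assumes T: "bounded_linear_fock d T" and x: "x \<in> Fn d m"
  shows "T x v = (\<Sum>w\<in>words d m. x w * T (basis_vec w) v)"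
proof -
  have "x = (\<lambda>v. \<Sum>w\<in>words d m. x w * basis_vec w v)"
    using x finite_words by (auto simp: Fn_def basis_vec_def fun_eq_iff if_distrib cong: if_cong)
  then have "T x = T (\<lambda>v. \<Sum>w\<in>words d m. x w * basis_vec w v)"
    by simp
  also have "\<dots> = (\<lambda>v. \<Sum>w\<in>words d m. x w * T (basis_vec w) v)"
    by (rule bounded_linear_fock_sum_basis[OF T finite_words]) (simp add: words_def)
  finally show ?thesis
    by simp
qed

text \<open>(T|F_k) \<otimes> I acting on all levels F_m with m \<ge> k at once.\<close>

definition tensor_id :: "nat \<Rightarrow> (vec \<Rightarrow> vec) \<Rightarrow> nat \<Rightarrow> vec \<Rightarrow> vec" where
  "tensor_id d T k x = (\<lambda>v. \<Sum>J\<in>words d k. entry T (take k v) J * x (J @ drop k v))"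

lemma Fn_zero: "y \<in> Fn d k \<Longrightarrow> w \<notin> words d k \<Longrightarrow> y w = 0"
  by (auto simp: Fn_def)

lemma entry_eq_0:
  assumes "block_diagonal d T" "J \<in> words d k" "I \<notin> words d k"
  shows "entry T I J = 0"
proof -
  have "basis_vec J \<in> Fn d k"
    using assms(2) by (auto simp: Fn_def basis_vec_def)
  then show ?thesis
    using assms by (auto simp: block_diagonal_def entry_def Fn_def)
qed

lemma tensor_id_0: "tensor_id d T 0 x v = entry T [] [] * x v"
  by (simp add: tensor_id_def words_0)

lemma tensor_id_top:
  assumes "bounded_linear_fock d T" "block_diagonal d T" and x: "x \<in> Fn d m"
  shows "tensor_id d T m x = T x"
proof
  fix v
  have "entry T (take m v) J * x (J @ drop m v) = x J * T (basis_vec J) v" if J: "J \<in> words d m" for J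
  proof (cases "length v \<le> m")
    case False
    then have "J @ drop m v \<notin> words d m" "v \<notin> words d m"
      using J by (auto simp: words_def)
    then show ?thesis
      using Fn_zero[OF x] entry_eq_0[OF assms(2) J] by (simp add: entry_def)
  qed (simp add: entry_def)
  then show "tensor_id d T m x v = T x v"
    by (simp add: tensor_id_def bounded_linear_fock_Fn_apply[OF assms(1) x])
qed

lemma restr_tensor_id_eq_tensor_id:
  assumes "k \<le> m" and x: "x \<in> Fn d m"
  shows "restr_tensor_id d T k m x = tensor_id d T k x"
proof
  fix v
  have "restr_tensor_id d T k m x v =
      (\<Sum>u\<in>words d k. \<Sum>r\<in>words d (m - k). x (u @ r) *
         (T (basis_vec (take k (u @ r))) (take k v) * basis_vec (drop k (u @ r)) (drop k v)))"
    unfolding restr_tensor_id_def tensor_def by (rule sum_words_append[OF \<open>k \<le> m\<close>])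
  also have "\<dots> = (\<Sum>u\<in>words d k. \<Sum>r\<in>words d (m - k).
         if r = drop k v then entry T (take k v) u * x (u @ drop k v) else 0)"
    by (intro sum.cong refl) (auto simp: words_def basis_vec_def entry_def)
  also have "\<dots> = tensor_id d T k x v"
    unfolding tensor_id_def
  proof (rule sum.cong[OF refl])
    fix u assume u: "u \<in> words d k"
    have "drop k v \<notin> words d (m - k) \<Longrightarrow> x (u @ drop k v) = 0"
      using u Fn_zero[OF x] append_in_words_iff[of u "drop k v" d "m - k"] assms(1)
      by (auto simp: words_def)
    then show "(\<Sum>r\<in>words d (m - k). if r = drop k v then entry T (take k v) u * x (u @ drop k v) else 0)
        = entry T (take k v) u * x (u @ drop k v)"
      by (auto simp: finite_words)
  qed
  finally show "restr_tensor_id d T k m x v = tensor_id d T k x v" .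
qed

definition approx_increment :: "nat \<Rightarrow> (vec \<Rightarrow> vec) \<Rightarrow> nat \<Rightarrow> vec \<Rightarrow> vec" where
  "approx_increment d T k x = (\<lambda>v. if take k v \<in> words d k
     then \<Sum>J\<in>words d k. coef T (take k v) J * x (J @ drop k v) else 0)"

lemma approx_Suc_apply:
  "approx d T (Suc n) x v = approx d T n x v + approx_increment d T (Suc n) x v"
proof -
  have "(\<Sum>I\<in>words d (Suc n). \<Sum>J\<in>words d (Suc n). coef T I J * Lword I (Lword_star J x) v)
     = (\<Sum>I\<in>words d (Suc n). if I = take (Suc n) v then
          \<Sum>J\<in>words d (Suc n). coef T (take (Suc n) v) J * x (J @ drop (Suc n) v) else 0)"
    by (rule sum.cong[OF refl]) (auto simp: Lword_apply Lword_star_apply words_def)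
  then show ?thesis
    using finite_words by (simp add: approx_increment_def sum.delta)
qed

lemma approx_increment_telescopes:
  assumes "valid_word d v" "n < length v"
  shows "approx_increment d T (Suc n) x v = tensor_id d T (Suc n) x v - tensor_id d T n x v"
proof -
  define i where "i = v ! n"
  define r where "r = drop (Suc n) v"
  have i: "i < d" and drop_n: "drop n v = i # r" and take_Suc: "take (Suc n) v = take n v @ [i]"
    using assms by (auto simp: i_def r_def valid_word_def Cons_nth_drop_Suc take_Suc_conv_app_nth)
  have take_in: "take (Suc n) v \<in> words d (Suc n)"
    using assms by (auto simp: words_def valid_word_def dest: in_set_takeD)
  have "(\<Sum>J\<in>words d (Suc n). if i = last J then entry T (take n v) (butlast J) * x (J @ r) else 0)
      = (\<Sum>u\<in>words d n. \<Sum>j<d. if j = i then entry T (take n v) u * x (u @ i # r) else 0)"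
    by (simp add: sum_words_Suc entry_def cong: if_cong)
  also have "\<dots> = tensor_id d T n x v"
    using i by (simp add: tensor_id_def drop_n)
  finally have "(\<Sum>J\<in>words d (Suc n). coef T (take (Suc n) v) J * x (J @ r))
      = tensor_id d T (Suc n) x v - tensor_id d T n x v"
    by (simp add: coef_def tensor_id_def take_Suc r_def entry_def left_diff_distrib
        sum_subtractf if_distrib[of "\<lambda>c. c * _"] cong: if_cong)
  then show ?thesis
    using take_in by (simp add: approx_increment_def r_def)
qed

lemma take_append_drop_in_words:
  assumes "take k v \<in> words d k" "J \<in> words d k" "J @ drop k v \<in> words d m"
  shows "v \<in> words d m" "k \<le> m"
proof -
  have "set v = set (take k v) \<union> set (drop k v)"
    by (metis append_take_drop_id set_append)
  then show "v \<in> words d m" "k \<le> m"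
    using assms by (auto simp: words_def valid_word_def)
qed

lemma tensor_id_off_level:
  assumes "block_diagonal d T" "x \<in> Fn d m" "v \<notin> words d m"
  shows "tensor_id d T k x v = 0"
proof -
  have "entry T (take k v) J * x (J @ drop k v) = 0" if J: "J \<in> words d k" for J
  proof (cases "take k v \<in> words d k")
    case True
    then have "J @ drop k v \<notin> words d m"
      using J assms(3) take_append_drop_in_words(1) by blast
    then show ?thesis
      using Fn_zero[OF assms(2)] by simp
  qed (simp add: entry_eq_0[OF assms(1) J])
  then show ?thesis
    by (auto simp: tensor_id_def intro!: sum.neutral)
qed

lemma approx_increment_eq_0:
  assumes "x \<in> Fn d m" "v \<notin> words d m \<or> m \<le> n"
  shows "approx_increment d T (Suc n) x v = 0"
proof -
  have "x (J @ drop (Suc n) v) = 0"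
    if "take (Suc n) v \<in> words d (Suc n)" "J \<in> words d (Suc n)" for J
  proof -
    have "J @ drop (Suc n) v \<notin> words d m"
      using take_append_drop_in_words[OF that, of m] assms(2) by auto
    then show ?thesis
      using Fn_zero[OF assms(1)] by simp
  qed
  then show ?thesis
    by (simp add: approx_increment_def)
qed

theorem approx_eq_tensor_id:
  assumes "block_diagonal d T" and x: "x \<in> Fn d m"
  shows "approx d T n x = tensor_id d T (min n m) x"
proof (induction n)
  case 0
  show ?case
    by (simp add: tensor_id_0)
next
  case (Suc n)
  show ?case
  proof
    fix v
    consider "n < m" "v \<in> words d m" | "n < m" "v \<notin> words d m" | "m \<le> n"
      by linarith
    then show "approx d T (Suc n) x v = tensor_id d T (min (Suc n) m) x v"
    proof cases
      case 1
      then show ?thesis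
        using approx_increment_telescopes[of d v n T x]
        by (simp add: approx_Suc_apply Suc words_def del: approx.simps)
    next
      case 2
      then show ?thesis
        using approx_increment_eq_0[OF x] tensor_id_off_level[OF assms]
        by (simp add: approx_Suc_apply Suc del: approx.simps)
    next
      case 3
      then show ?thesis
        using approx_increment_eq_0[OF x] by (simp add: approx_Suc_apply Suc del: approx.simps)
    qed
  qed
qed

theorem lemma3p2:
  fixes d :: nat and T :: "vec \<Rightarrow> vec"
  assumes "d \<ge> 2"
    and "bounded_linear_fock d T"
    and "block_diagonal d T"
  shows "\<forall>n m. \<forall>x\<in>Fn d m.
           approx d T n x = (if m \<le> n then T x else restr_tensor_id d T n m x)"
proof (intro allI ballI)
  fix n m x
  assume x: "x \<in> Fn d m"
  show "approx d T n x = (if m \<le> n then T x else restr_tensor_id d T n m x)"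
    using approx_eq_tensor_id[OF assms(3) x, of n] tensor_id_top[OF assms(2,3) x]
      restr_tensor_id_eq_tensor_id[OF _ x, of n T]
    by (simp add: min_def)
qed

end
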